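(* Let $n\ge 3$, let $d$ be an integer, and let $i,j\in[n-1]$ with $\lvert i-j\rvert=1$. Then \[ b_{n,d}(i,j)=b_{n-2,\,d-1}\quad\text{and}\quad p_{n,d}(i,j)=p_{n-2,\,d-1}. \]
   Context: For a word $w=w_1\cdots w_k$ of pairwise distinct positive integers, an index $t\in[k-1]$ is an ascent if $w_t<w_{t+1}$ and a descent if $w_t>w_{t+1}$; $\operatorname{des}(w)$ is the number of descents and the height is $h(w)=(\#\text{ascents})-(\#\text{descents})$ (so $h(w)=0$ if $k\le 1$). A word is ballot if every prefix has nonnegative height. A ballot permutation of $[n]$ is a permutation $\pi_1\cdots\pi_n$ (one-line notation) that is a ballot word. $\mathscr{B}_{n,d}$ is the set of ballot permutations of $[n]$ with exactly $d$ descents, $b_{n,d}=\lvert\mathscr{B}_{n,d}\rvert$ (so $b_{m,d}=0$ for $d<0$), and $b_{n,d}(i,j)$ is the number of $\pi\in\mathscr{B}_{n,d}$ containing $i\,n\,j$ as a factor, i.e. $\pi_t=i,\pi_{t+1}=n,\pi_{t+2}=j$ for some $t$. A cycle $(c_1c_2\cdots c_k)$ of a permutation means $c_1\mapsto c_2\mapsto\cdots\mapsto c_k\mapsto c_1$. Its cyclic descent number is $\operatorname{cdes}(c)=\lvert\{t\in[k]: c_t>c_{t+1}\}\rvert$ and cyclic ascent number $\operatorname{casc}(c)=\lvert\{t\in[k]: c_t<c_{t+1}\}\rvert$, where $c_{k+1}=c_1$; its cyclic weight is $w(c)=\min(\operatorname{cdes}(c),\operatorname{casc}(c))$, and the cyclic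 weight $w(\pi)$ of a permutation is the sum of the cyclic weights of its cycles. An odd order permutation is one all of whose cycles have odd length. $\mathscr{P}_{n,d}$ is the set of odd order permutations of $[n]$ with cyclic weight $d$, $p_{n,d}=\lvert\mathscr{P}_{n,d}\rvert$, and $p_{n,d}(i,j)$ is the number of $\pi\in\mathscr{P}_{n,d}$ containing $i\,n\,j$ as a cyclic factor, i.e. some cycle of $\pi$, written starting at a suitable element, contains $i,n,j$ consecutively (equivalently $\pi(i)=n$ and $\pi(n)=j$). *)

theory Defs
  imports "HOL-Combinatorics.Permutations"
begin

(* Words are lists of naturals; permutations of [n] in one-line notation are lists
   xs with distinct xs and set xs = {1..n}. Positions are 0-based in lists. *)

definition asc :: "nat list \<Rightarrow> nat" where
  "asc w = card {t. Suc t < length w \<and> w ! t < w ! Suc t}"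

definition des :: "nat list \<Rightarrow> nat" where
  "des w = card {t. Suc t < length w \<and> w ! t > w ! Suc t}"

definition height :: "nat list \<Rightarrow> int" where
  "height w = int (asc w) - int (des w)"

definition ballot :: "nat list \<Rightarrow> bool" where
  "ballot w \<longleftrightarrow> (\<forall>k \<le> length w. height (take k w) \<ge> 0)"

definition ballot_perms :: "nat \<Rightarrow> int \<Rightarrow> nat list set" where
  "ballot_perms n d = {w. distinct w \<and> set w = {1..n} \<and> ballot w \<and> int (des w) = d}"

definition b :: "nat \<Rightarrow> int \<Rightarrow> nat" where
  "b n d = card (ballot_perms n d)"

definition b_factor :: "nat \<Rightarrow> int \<Rightarrow> nat \<Rightarrow> nat \<Rightarrow> nat" where
  "b_factor n d i j = card {w \<in> ballot_perms n d.
      \<exists>t. t + 2 < length w \<and> w ! t = i \<and> w ! (t + 1) = n \<and> w ! (t + 2) = j}"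

definition cyc :: "(nat \<Rightarrow> nat) \<Rightarrow> nat \<Rightarrow> nat set" where
  "cyc \<pi> x = {(\<pi> ^^ k) x | k. True}"

definition cycles_of :: "nat \<Rightarrow> (nat \<Rightarrow> nat) \<Rightarrow> nat set set" where
  "cycles_of n \<pi> = cyc \<pi> ` {1..n}"

(* cyclic descents / ascents of the cycle C of \<pi>: positions c_t with c_t > c_{t+1} = \<pi> c_t *)
definition cdes :: "(nat \<Rightarrow> nat) \<Rightarrow> nat set \<Rightarrow> nat" where
  "cdes \<pi> C = card {y \<in> C. \<pi> y < y}"

definition casc :: "(nat \<Rightarrow> nat) \<Rightarrow> nat set \<Rightarrow> nat" where
  "casc \<pi> C = card {y \<in> C. y < \<pi> y}"

definition cweight :: "nat \<Rightarrow> (nat \<Rightarrow> nat) \<Rightarrow> nat" where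
  "cweight n \<pi> = (\<Sum>C \<in> cycles_of n \<pi>. min (cdes \<pi> C) (casc \<pi> C))"

definition odd_order :: "nat \<Rightarrow> (nat \<Rightarrow> nat) \<Rightarrow> bool" where
  "odd_order n \<pi> \<longleftrightarrow> (\<forall>C \<in> cycles_of n \<pi>. odd (card C))"

definition odd_perms :: "nat \<Rightarrow> int \<Rightarrow> (nat \<Rightarrow> nat) set" where
  "odd_perms n d = {\<pi>. \<pi> permutes {1..n} \<and> odd_order n \<pi> \<and> int (cweight n \<pi>) = d}"

definition p :: "nat \<Rightarrow> int \<Rightarrow> nat" where
  "p n d = card (odd_perms n d)"

(* i n j is a cyclic factor of \<pi> iff \<pi> i = n and \<pi> n = j *)
definition p_factor :: "nat \<Rightarrow> int \<Rightarrow> nat \<Rightarrow> nat \<Rightarrow> nat" where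
  "p_factor n d i j = card {\<pi> \<in> odd_perms n d. \<pi> i = n \<and> \<pi> n = j}"

end

theory Submission
  imports Defs "HOL-Library.Sublist" "HOL-Library.Infinite_Set" "HOL-Combinatorics.Orbits"
    "HOL-Combinatorics.Multiset_Permutations"
begin

(* Both identities come from deleting the letters i and n.

   In a ballot permutation u i n j v, deleting i n leaves the word u j v on [n] - {i, n} with
   exactly one descent fewer (the descent n j). Since |i - j| = 1, the letters i and j compare
   alike with every other letter, so the prefix u i n j q has the same height as u j q, and the
   only prefixes lost, u i and u i n, have heights h(u j) and h(u j) + 1: the ballot condition
   is unaffected.

   In an odd order permutation with i -> n -> j, cutting i and n out of their cycle shortens it
   by two and removes the cyclic ascent i n and the cyclic descent n j; the new step k -> j
   compares like the old step k -> i, except when the cycle is (i n j), whose weight 1 drops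
   to the weight 0 of the fixed point j. Either way the cyclic weight drops by exactly one.

   Finally, an order isomorphism [n] - {i, n} -> [n - 2] preserves descents, heights, cycle
   lengths and cyclic descents, so both counts only depend on the size of the alphabet. *)

lemma adjacent_less_iff:
  fixes i j y :: nat
  assumes "\<bar>int i - int j\<bar> = 1" "y \<noteq> i" "y \<noteq> j"
  shows "y < i \<longleftrightarrow> y < j" and "i < y \<longleftrightarrow> j < y"
  using assms by linarith+

lemma strict_mono_on_inv_into:
  fixes h :: "'a::linorder \<Rightarrow> 'b::linorder"
  assumes "bij_betw h X Y" "strict_mono_on X h"
  shows "strict_mono_on Y (inv_into X h)"
proof (rule strict_mono_onI)
  fix y y' assume "y \<in> Y" "y' \<in> Y" "y < y'"
  moreover have "inv_into X h z \<in> X" "h (inv_into X h z) = z" if "z \<in> Y" for z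
    using that assms(1) by (auto simp: bij_betw_def inv_into_into f_inv_into_f)
  ultimately show "inv_into X h y < inv_into X h y'"
    using strict_mono_on_less[OF assms(2)] by metis
qed

lemma obtain_order_iso:
  fixes X Y :: "'a::wellorder set"
  assumes "finite X" "finite Y" "card X = card Y"
  obtains h where "bij_betw h X Y" "strict_mono_on X h"
proof -
  obtain f where f: "bij_betw f {..<card X} X" "strict_mono_on {..<card X} f"
    using ex_bij_betw_strict_mono_card[OF assms(1)] by blast
  obtain g where "bij_betw g {..<card Y} Y" "strict_mono_on {..<card Y} g"
    using ex_bij_betw_strict_mono_card[OF assms(2)] by blast
  then have g: "bij_betw g {..<card X} Y" "strict_mono_on {..<card X} g"
    by (simp_all add: assms(3))
  have "bij_betw (g \<circ> inv_into {..<card X} f) X Y"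
    using bij_betw_trans[OF bij_betw_inv_into[OF f(1)] g(1)] .
  moreover have "strict_mono_on X (g \<circ> inv_into {..<card X} f)"
    using monotone_on_o[OF g(2) strict_mono_on_inv_into[OF f]]
      bij_betw_imp_surj_on[OF bij_betw_inv_into[OF f(1)]] by simp
  ultimately show ?thesis using that by blast
qed

lemma asc_conv_filter: "asc w = length (filter (\<lambda>(a, b). a < b) (zip w (tl w)))"
  unfolding asc_def length_filter_conv_card
  by (rule arg_cong[where f = card]) (auto simp: nth_tl)

lemma des_conv_filter: "des w = length (filter (\<lambda>(a, b). b < a) (zip w (tl w)))"
  unfolding des_def length_filter_conv_card
  by (rule arg_cong[where f = card]) (auto simp: nth_tl)

lemma asc_simps [simp]:
  "asc [] = 0" "asc [x] = 0" "asc (x # y # w) = (if x < y then 1 else 0) + asc (y # w)"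
  by (simp_all add: asc_conv_filter)

lemma des_simps [simp]:
  "des [] = 0" "des [x] = 0" "des (x # y # w) = (if y < x then 1 else 0) + des (y # w)"
  by (simp_all add: des_conv_filter)

lemma asc_append_Cons: "asc (u @ x # v) = asc (u @ [x]) + asc (x # v)"
  by (induction u rule: induct_list012) auto

lemma des_append_Cons: "des (u @ x # v) = des (u @ [x]) + des (x # v)"
  by (induction u rule: induct_list012) auto

lemma height_append_Cons: "height (u @ x # v) = height (u @ [x]) + height (x # v)"
  unfolding height_def asc_append_Cons[of u x v] des_append_Cons[of u x v] by simp

lemma asc_des_snoc_adjacent:
  assumes "\<bar>int i - int j\<bar> = 1" "i \<notin> set u" "j \<notin> set u"
  shows "asc (u @ [i]) = asc (u @ [j])" "des (u @ [i]) = des (u @ [j])"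
proof (atomize (full), cases u rule: rev_cases)
  case (snoc u' y)
  then have "y \<noteq> i" "y \<noteq> j" using assms(2,3) by auto
  with assms(1) have "y < i \<longleftrightarrow> y < j" "i < y \<longleftrightarrow> j < y" by (simp_all add: adjacent_less_iff)
  then show "asc (u @ [i]) = asc (u @ [j]) \<and> des (u @ [i]) = des (u @ [j])"
    using snoc asc_append_Cons[of u' y "[_]"] des_append_Cons[of u' y "[_]"] by simp
qed simp

lemma height_snoc_adjacent:
  assumes "\<bar>int i - int j\<bar> = 1" "i \<notin> set u" "j \<notin> set u"
  shows "height (u @ [i]) = height (u @ [j])"
  using asc_des_snoc_adjacent[OF assms] by (simp add: height_def)

lemma ballot_iff_prefixes: "ballot w \<longleftrightarrow> (\<forall>p. prefix p w \<longrightarrow> 0 \<le> height p)"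
proof -
  have "prefix p w \<longleftrightarrow> (\<exists>k \<le> length w. p = take k w)" for p
    by (metis append_eq_conv_conj prefix_def prefix_length_le take_is_prefix)
  then show ?thesis unfolding ballot_def by auto
qed

lemma ballot_append_Cons:
  "ballot (u @ x # v) \<longleftrightarrow> ballot u \<and> (\<forall>q. prefix q v \<longrightarrow> 0 \<le> height (u @ x # q))"
  unfolding ballot_iff_prefixes prefix_append prefix_Cons by auto

lemma all_prefixes_Cons: "(\<forall>q. prefix q (x # v) \<longrightarrow> P q) \<longleftrightarrow> P [] \<and> (\<forall>q. prefix q v \<longrightarrow> P (x # q))"
  by (auto simp: prefix_Cons)

context
  fixes i m j :: nat and u :: "nat list"
  assumes below: "i < m" "j < m" and adjacent: "\<bar>int i - int j\<bar> = 1"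
    and avoids: "i \<notin> set u" "j \<notin> set u"
begin

lemma des_contract_factor: "des (u @ i # m # j # v) = des (u @ j # v) + 1"
  using des_append_Cons[of u i "m # j # v"] des_append_Cons[of u j v]
    asc_des_snoc_adjacent(2)[OF adjacent avoids] below by simp

lemma height_contract_factor: "height (u @ i # m # j # v) = height (u @ j # v)"
  using height_append_Cons[of u i "m # j # v"] height_append_Cons[of u j v]
    height_snoc_adjacent[OF adjacent avoids] below by (simp add: height_def)

lemma ballot_contract_factor: "ballot (u @ i # m # j # v) \<longleftrightarrow> ballot (u @ j # v)"
proof -
  have "height (u @ [i, m]) = height (u @ [i]) + 1"
    using height_append_Cons[of u i "[m]"] below by (simp add: height_def)
  then show ?thesis
    using height_snoc_adjacent[OF adjacent avoids] height_contract_factor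
    unfolding ballot_append_Cons[of u i] ballot_append_Cons[of u j] all_prefixes_Cons
    by auto
qed

end

lemma asc_des_map_strict_mono:
  assumes "strict_mono_on (set w) h"
  shows "asc (map h w) = asc w" "des (map h w) = des w"
proof -
  have "h (w ! t) < h (w ! Suc t) \<longleftrightarrow> w ! t < w ! Suc t"
    "h (w ! Suc t) < h (w ! t) \<longleftrightarrow> w ! Suc t < w ! t" if "Suc t < length w" for t
    using that strict_mono_on_less[OF assms] by simp_all
  then show "asc (map h w) = asc w" "des (map h w) = des w"
    unfolding asc_def des_def by (auto intro!: arg_cong[where f = card])
qed

lemma ballot_map_strict_mono:
  assumes "strict_mono_on (set w) h"
  shows "ballot (map h w) \<longleftrightarrow> ballot w"
proof -
  have "strict_mono_on (set (take k w)) h" for k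
    using assms set_take_subset by (rule monotone_on_subset)
  then show ?thesis
    unfolding ballot_def height_def by (simp add: take_map asc_des_map_strict_mono)
qed

definition ballot_words :: "nat set \<Rightarrow> int \<Rightarrow> nat list set" where
  "ballot_words X d = {w \<in> permutations_of_set X. ballot w \<and> int (des w) = d}"

lemma ballot_perms_eq_ballot_words: "ballot_perms n d = ballot_words {1..n} d"
  by (auto simp: ballot_perms_def ballot_words_def permutations_of_set_def)

lemma card_ballot_words_le:
  assumes "bij_betw h X Y" "strict_mono_on X h"
  shows "card (ballot_words X d) \<le> card (ballot_words Y d)"
proof (rule card_inj_on_le)
  have inj: "inj_on h X" and Y: "h ` X = Y" using assms(1) by (auto simp: bij_betw_def)
  show "inj_on (map h) (ballot_words X d)"
  proof (rule inj_onI)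
    fix w w' assume "w \<in> ballot_words X d" "w' \<in> ballot_words X d" "map h w = map h w'"
    then show "w = w'"
      using inj inj_on_map_eq_map[of h w w'] by (simp add: ballot_words_def permutations_of_set_def)
  qed
  show "map h ` ballot_words X d \<subseteq> ballot_words Y d"
  proof (rule image_subsetI)
    fix w assume "w \<in> ballot_words X d"
    then have w: "set w = X" "distinct w" "ballot w" "int (des w) = d"
      by (simp_all add: ballot_words_def permutations_of_set_def)
    have "distinct (map h w)" using w(1,2) inj by (simp add: distinct_map)
    moreover have "set (map h w) = Y" using w(1) Y by simp
    moreover have "ballot (map h w)" "des (map h w) = des w"
      using w(1,3) assms(2) ballot_map_strict_mono asc_des_map_strict_mono by simp_all
    ultimately show "map h w \<in> ballot_words Y d"
      using w(4) by (simp add: ballot_words_def permutations_of_set_def)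
  qed
  show "finite (ballot_words Y d)"
    by (simp add: ballot_words_def)
qed

lemma card_ballot_words_eq:
  assumes "finite X" "finite Y" "card X = card Y"
  shows "card (ballot_words X d) = card (ballot_words Y d)"
proof -
  obtain h where h: "bij_betw h X Y" "strict_mono_on X h"
    using obtain_order_iso[OF assms] .
  show ?thesis
    using card_ballot_words_le[OF h] card_ballot_words_le[OF bij_betw_inv_into[OF h(1)]
        strict_mono_on_inv_into[OF h]] by (rule antisym)
qed

lemma factor_at_iff_append:
  "(\<exists>t. t + 2 < length w \<and> w ! t = x \<and> w ! (t + 1) = y \<and> w ! (t + 2) = z)
    \<longleftrightarrow> (\<exists>u v. w = u @ x # y # z # v)"
proof
  assume "\<exists>t. t + 2 < length w \<and> w ! t = x \<and> w ! (t + 1) = y \<and> w ! (t + 2) = z"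
  then obtain t where t: "t + 2 < length w" "w ! t = x" "w ! (t + 1) = y" "w ! (t + 2) = z"
    by blast
  have "drop (t + k) w = w ! (t + k) # drop (t + k + 1) w" if "k \<le> 2" for k
    using that t(1) Cons_nth_drop_Suc[of "t + k" w] by simp
  from this[of 0] this[of 1] this[of 2] t have "drop t w = x # y # z # drop (t + 3) w"
    by (simp add: numeral_3_eq_3)
  then have "w = take t w @ x # y # z # drop (t + 3) w"
    by (metis append_take_drop_id)
  then show "\<exists>u v. w = u @ x # y # z # v" by blast
next
  assume "\<exists>u v. w = u @ x # y # z # v"
  then obtain u v where "w = u @ x # y # z # v" by blast
  then show "\<exists>t. t + 2 < length w \<and> w ! t = x \<and> w ! (t + 1) = y \<and> w ! (t + 2) = z"
    by (intro exI[of _ "length u"]) (simp add: nth_append)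
qed

lemma ballot_words_contract_factor:
  assumes "i < m" "j < m" "\<bar>int i - int j\<bar> = 1" "i \<in> X" "m \<in> X"
    and "i \<notin> set (u @ v)" "m \<notin> set (u @ v)" "j \<notin> set u"
  shows "u @ i # m # j # v \<in> ballot_words X d \<longleftrightarrow> u @ j # v \<in> ballot_words (X - {i, m}) (d - 1)"
proof -
  have "i \<noteq> j" using assms(3) by auto
  then have "set (u @ i # m # j # v) = X \<longleftrightarrow> set (u @ j # v) = X - {i, m}"
    using assms(1,2,4-7) by auto
  moreover have "distinct (u @ i # m # j # v) \<longleftrightarrow> distinct (u @ j # v)"
    using assms(1,2,6,7) \<open>i \<noteq> j\<close> by auto
  moreover have "int (des (u @ i # m # j # v)) = d \<longleftrightarrow> int (des (u @ j # v)) = d - 1"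
    using des_contract_factor[of i m j u v] assms(1-3,6,8) by auto
  ultimately show ?thesis
    using ballot_contract_factor[of i m j u v] assms(1-3,6,8)
    by (simp add: ballot_words_def permutations_of_set_def)
qed

lemma filter_distinct_factor:
  assumes "distinct (u @ i # m # j # v)"
  shows "filter (\<lambda>x. x \<notin> {i, m}) (u @ i # m # j # v) = u @ j # v"
proof -
  have "\<forall>x \<in> set u. x \<notin> {i, m}" "\<forall>x \<in> set v. x \<notin> {i, m}" "j \<notin> {i, m}"
    using assms by auto
  then show ?thesis by (simp only: filter_append filter_True) simp
qed

lemma inj_on_filter_factor:
  "inj_on (filter (\<lambda>x. x \<notin> {i, m})) {w. distinct w \<and> (\<exists>u v. w = u @ i # m # j # v)}"
proof (rule inj_onI, clarify)
  fix u v u' v'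
  assume dist: "distinct (u @ i # m # j # v)" "distinct (u' @ i # m # j # v')"
    and eq: "filter (\<lambda>x. x \<notin> {i, m}) (u @ i # m # j # v) = filter (\<lambda>x. x \<notin> {i, m}) (u' @ i # m # j # v')"
  have "u @ j # v = u' @ j # v'"
    using eq unfolding filter_distinct_factor[OF dist(1)] filter_distinct_factor[OF dist(2)] .
  moreover have "j \<notin> set u" "j \<notin> set v" using dist(1) by auto
  ultimately show "u @ i # m # j # v = u' @ i # m # j # v'"
    by (simp add: append_Cons_eq_iff)
qed

lemma image_filter_factor:
  assumes "i < m" "j < m" "\<bar>int i - int j\<bar> = 1" "i \<in> X" "m \<in> X" "j \<in> X"
  shows "filter (\<lambda>x. x \<notin> {i, m}) ` {w \<in> ballot_words X d. \<exists>u v. w = u @ i # m # j # v}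
    = ballot_words (X - {i, m}) (d - 1)"
proof (intro equalityI subsetI)
  fix w' assume "w' \<in> filter (\<lambda>x. x \<notin> {i, m}) ` {w \<in> ballot_words X d. \<exists>u v. w = u @ i # m # j # v}"
  then obtain u v where w: "u @ i # m # j # v \<in> ballot_words X d"
    and w': "w' = filter (\<lambda>x. x \<notin> {i, m}) (u @ i # m # j # v)" by blast
  then have dist: "distinct (u @ i # m # j # v)"
    by (simp add: ballot_words_def permutations_of_set_def)
  have "w' = u @ j # v"
    using w' unfolding filter_distinct_factor[OF dist] .
  moreover have "i \<notin> set (u @ v)" "m \<notin> set (u @ v)" "j \<notin> set u" using dist by auto
  ultimately show "w' \<in> ballot_words (X - {i, m}) (d - 1)"
    using w ballot_words_contract_factor[OF assms(1-5)] by simp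
next
  fix w assume w: "w \<in> ballot_words (X - {i, m}) (d - 1)"
  then have "distinct w" "set w = X - {i, m}"
    by (simp_all add: ballot_words_def permutations_of_set_def)
  moreover have "j \<in> X - {i, m}" using assms(2,3,6) by auto
  ultimately obtain u v where uv: "w = u @ j # v" by (metis split_list)
  have avoid: "i \<notin> set (u @ v)" "m \<notin> set (u @ v)" "j \<notin> set u" "j \<notin> set v"
    using uv \<open>distinct w\<close> \<open>set w = X - {i, m}\<close> by auto
  then have dist: "distinct (u @ i # m # j # v)"
    using uv \<open>distinct w\<close> \<open>j \<in> X - {i, m}\<close> assms(1) by auto
  have "u @ i # m # j # v \<in> ballot_words X d"
    using w uv ballot_words_contract_factor[OF assms(1-5) avoid(1-3)] by simp
  moreover have "w = filter (\<lambda>x. x \<notin> {i, m}) (u @ i # m # j # v)"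
    unfolding filter_distinct_factor[OF dist] uv ..
  ultimately show "w \<in> filter (\<lambda>x. x \<notin> {i, m}) ` {w \<in> ballot_words X d. \<exists>u v. w = u @ i # m # j # v}"
    by blast
qed

lemma bij_betw_contract_factor:
  assumes "i < m" "j < m" "\<bar>int i - int j\<bar> = 1" "i \<in> X" "m \<in> X" "j \<in> X"
  shows "bij_betw (filter (\<lambda>x. x \<notin> {i, m})) {w \<in> ballot_words X d. \<exists>u v. w = u @ i # m # j # v}
           (ballot_words (X - {i, m}) (d - 1))"
  unfolding bij_betw_def
proof
  show "inj_on (filter (\<lambda>x. x \<notin> {i, m})) {w \<in> ballot_words X d. \<exists>u v. w = u @ i # m # j # v}"
    using inj_on_filter_factor
    by (rule inj_on_subset) (auto simp: ballot_words_def permutations_of_set_def)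
qed (rule image_filter_factor[OF assms])

definition cweight_on :: "nat set \<Rightarrow> (nat \<Rightarrow> nat) \<Rightarrow> nat" where
  "cweight_on X \<sigma> = (\<Sum>C \<in> cyc \<sigma> ` X. min (cdes \<sigma> C) (casc \<sigma> C))"

definition odd_order_on :: "nat set \<Rightarrow> (nat \<Rightarrow> nat) \<Rightarrow> bool" where
  "odd_order_on X \<sigma> \<longleftrightarrow> (\<forall>C \<in> cyc \<sigma> ` X. odd (card C))"

definition odd_perms_on :: "nat set \<Rightarrow> int \<Rightarrow> (nat \<Rightarrow> nat) set" where
  "odd_perms_on X d = {\<sigma>. \<sigma> permutes X \<and> odd_order_on X \<sigma> \<and> int (cweight_on X \<sigma>) = d}"

lemma odd_perms_eq_odd_perms_on: "odd_perms n d = odd_perms_on {1..n} d"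
  by (simp add: odd_perms_def odd_perms_on_def odd_order_def odd_order_on_def cweight_def
      cweight_on_def cycles_of_def)

lemma cyc_eq_orbit: "permutation \<sigma> \<Longrightarrow> cyc \<sigma> = orbit \<sigma>"
  by (simp add: fun_eq_iff cyc_def orbit_altdef_permutation)

lemma orbit_eq_if_mem: "permutation \<sigma> \<Longrightarrow> y \<in> orbit \<sigma> x \<Longrightarrow> orbit \<sigma> y = orbit \<sigma> x"
  by (meson cyclic_on_orbit' orbit_cyclic_eq3)

(* Composing with the 3-cycle m -> i -> j -> m turns the stretch k -> i -> m -> j of a cycle
   into k -> j and makes i and m fixed points. *)
definition contract_cycle :: "nat \<Rightarrow> nat \<Rightarrow> nat \<Rightarrow> (nat \<Rightarrow> nat) \<Rightarrow> nat \<Rightarrow> nat" where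
  "contract_cycle i m j \<pi> = Transposition.transpose j i \<circ> Transposition.transpose j m \<circ> \<pi>"

definition expand_cycle :: "nat \<Rightarrow> nat \<Rightarrow> nat \<Rightarrow> (nat \<Rightarrow> nat) \<Rightarrow> nat \<Rightarrow> nat" where
  "expand_cycle i m j \<rho> = Transposition.transpose j m \<circ> Transposition.transpose j i \<circ> \<rho>"

(* The letter m plays the role of n. *)
locale cycle_contraction =
  fixes U :: "nat set" and \<pi> :: "nat \<Rightarrow> nat" and i m j :: nat
  assumes finite_U: "finite U" and permutes_U: "\<pi> permutes U" and i_in_U: "i \<in> U"
    and \<pi>_i: "\<pi> i = m" and \<pi>_m: "\<pi> m = j"
    and i_less: "i < m" and j_less: "j < m" and adjacent: "\<bar>int i - int j\<bar> = 1"
begin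

abbreviation \<rho> :: "nat \<Rightarrow> nat" where "\<rho> \<equiv> contract_cycle i m j \<pi>"

abbreviation C :: "nat set" where "C \<equiv> orbit \<pi> i"

lemma i_ne_j: "i \<noteq> j"
  using adjacent by auto

lemma m_in_U: "m \<in> U" and j_in_U: "j \<in> U"
  using i_in_U permutes_in_image[OF permutes_U] \<pi>_i \<pi>_m by metis+

lemma permutation_\<pi>: "permutation \<pi>"
  using finite_U permutes_U permutation_permutes by blast

lemma \<pi>_eq_iff: "\<pi> x = \<pi> y \<longleftrightarrow> x = y"
  using permutes_inj[OF permutes_U] by (auto dest: injD)

lemma contract_apply: "\<rho> x = (if x = i \<or> x = m then x else if \<pi> x = i then j else \<pi> x)"
  using \<pi>_eq_iff[of x i] \<pi>_eq_iff[of x m] \<pi>_i \<pi>_m i_less j_less i_ne_j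
  by (auto simp: contract_cycle_def transpose_def)

lemma contract_permutes: "\<rho> permutes U - {i, m}"
proof (rule permutes_superset)
  show "\<rho> permutes U"
    unfolding contract_cycle_def comp_assoc
    using permutes_U i_in_U m_in_U j_in_U by (intro permutes_compose permutes_swap_id)
qed (auto simp: contract_apply)

lemma permutation_\<rho>: "permutation \<rho>"
  using finite_U contract_permutes permutation_permutes by blast

lemma i_in_C: "i \<in> C" and m_in_C: "m \<in> C" and j_in_C: "j \<in> C"
  using permutation_self_in_orbit[OF permutation_\<pi>] orbit.base[of \<pi> i] orbit.step[of m \<pi> i]
  by (simp_all add: \<pi>_i \<pi>_m)

lemma contract_eq_off_C:
  assumes "x \<notin> C" "y \<in> orbit \<pi> x" shows "\<rho> y = \<pi> y"
proof -
  have "z \<notin> C" if "z \<in> orbit \<pi> x" for z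
    using that assms(1) orbit_eq_if_mem[OF permutation_\<pi>] permutation_self_in_orbit[OF permutation_\<pi>]
    by metis
  then have "y \<notin> C" "\<pi> y \<notin> C"
    using assms(2) orbit.step[OF assms(2)] by blast+
  then show ?thesis
    using i_in_C m_in_C by (auto simp: contract_apply)
qed

lemma orbit_contract_other: "x \<notin> C \<Longrightarrow> orbit \<rho> x = orbit \<pi> x"
  by (rule orbit_cong) (use permutation_self_in_orbit[OF permutation_\<pi>] contract_eq_off_C in auto)

lemma j_in_contracted: "j \<in> C - {i, m}"
  using j_in_C i_ne_j j_less by simp

lemma contract_maps_contracted:
  assumes "y \<in> C - {i, m}" shows "\<rho> y \<in> C - {i, m}"
proof (cases "\<pi> y = i")
  case True
  then show ?thesis using assms j_in_contracted by (simp add: contract_apply)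
next
  case False
  have "\<pi> y \<noteq> m" using assms \<pi>_i \<pi>_eq_iff by auto
  then show ?thesis using False assms orbit.step[of y \<pi> i] by (simp add: contract_apply)
qed

lemma orbit_contract_j: "orbit \<rho> j = C - {i, m}"
proof
  show "orbit \<rho> j \<subseteq> C - {i, m}"
  proof
    fix y assume "y \<in> orbit \<rho> j"
    then show "y \<in> C - {i, m}"
      by induction (use contract_maps_contracted j_in_contracted in auto)
  qed
  have "y \<in> orbit \<rho> j" if "y \<in> orbit \<pi> j" "y \<notin> {i, m}" for y
    using that
  proof (induction rule: orbit.induct)
    case base
    then have "\<rho> j = \<pi> j"
      using i_ne_j j_less \<pi>_m \<pi>_eq_iff[of j m] by (auto simp: contract_apply)
    then show ?case using orbit.base[of \<rho> j] by simp
  next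
    case (step y)
    show ?case
    proof (cases "y = m")
      case True
      then show ?thesis using \<pi>_m permutation_self_in_orbit[OF permutation_\<rho>] by simp
    next
      case False
      then have "y \<noteq> i" "\<pi> y \<noteq> i" using step.prems \<pi>_i by auto
      then have "\<rho> y = \<pi> y" using False by (simp add: contract_apply)
      then show ?thesis using step.IH False \<open>y \<noteq> i\<close> orbit.step[of y \<rho> j] by simp
    qed
  qed
  then show "C - {i, m} \<subseteq> orbit \<rho> j"
    using orbit_eq_if_mem[OF permutation_\<pi> j_in_C] by auto
qed

lemma cycles_contract:
  "orbit \<rho> ` (U - {i, m}) = insert (C - {i, m}) (orbit \<pi> ` U - {C})"
proof (intro equalityI subsetI)
  fix D assume "D \<in> orbit \<rho> ` (U - {i, m})"
  then obtain x where x: "x \<in> U - {i, m}" "D = orbit \<rho> x" by blast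
  show "D \<in> insert (C - {i, m}) (orbit \<pi> ` U - {C})"
  proof (cases "x \<in> C")
    case True
    then have "D = C - {i, m}"
      using x orbit_eq_if_mem[OF permutation_\<rho>] orbit_contract_j by auto
    then show ?thesis by simp
  next
    case False
    then have "orbit \<pi> x \<noteq> C" using permutation_self_in_orbit[OF permutation_\<pi>] by metis
    then show ?thesis using False x orbit_contract_other by auto
  qed
next
  fix D assume D: "D \<in> insert (C - {i, m}) (orbit \<pi> ` U - {C})"
  show "D \<in> orbit \<rho> ` (U - {i, m})"
  proof (cases "D = C - {i, m}")
    case True
    then show ?thesis using orbit_contract_j j_in_contracted j_in_U by (metis Diff_iff imageI)
  next
    case False
    then obtain x where x: "x \<in> U" "D = orbit \<pi> x" "orbit \<pi> x \<noteq> C" using D by blast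
    then have "x \<notin> C" using orbit_eq_if_mem[OF permutation_\<pi>] by blast
    then have "x \<in> U - {i, m}" using x(1) i_in_C m_in_C by blast
    then show ?thesis using x(2) orbit_contract_other[OF \<open>x \<notin> C\<close>] by blast
  qed
qed

lemma contracted_notin_cycles: "C - {i, m} \<notin> orbit \<pi> ` U - {C}"
proof
  assume "C - {i, m} \<in> orbit \<pi> ` U - {C}"
  then obtain x where "orbit \<pi> x = C - {i, m}" "orbit \<pi> x \<noteq> C" by blast
  then show False
    using j_in_contracted orbit_eq_if_mem[OF permutation_\<pi>] orbit_eq_if_mem[OF permutation_\<pi> j_in_C]
    by metis
qed

lemma finite_C: "finite C"
  using permutes_orbit_subset[OF permutes_U i_in_U] finite_U finite_subset by blast

lemma card_C: "card C = card (C - {i, m}) + 2"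
proof -
  have "{i, m} \<subseteq> C" using i_in_C m_in_C by simp
  moreover have "card {i, m} = 2" using i_less by simp
  ultimately show ?thesis
    using card_Diff_subset[of "{i, m}" C] card_mono[OF finite_C, of "{i, m}"] by simp
qed

lemma cdes_casc_contract_cycle:
  "min (cdes \<pi> C) (casc \<pi> C) = min (cdes \<rho> (C - {i, m})) (casc \<rho> (C - {i, m})) + 1"
proof -
  have "{y \<in> C. \<pi> y < y} = insert m {y \<in> C - {i, m}. \<pi> y < y}"
    and "{y \<in> C. y < \<pi> y} = insert i {y \<in> C - {i, m}. y < \<pi> y}"
    using i_in_C m_in_C \<pi>_i \<pi>_m i_less j_less by auto
  then have des: "cdes \<pi> C = card {y \<in> C - {i, m}. \<pi> y < y} + 1"
    and asc: "casc \<pi> C = card {y \<in> C - {i, m}. y < \<pi> y} + 1"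
    using finite_C by (simp_all add: cdes_def casc_def)
  show ?thesis
  proof (cases "\<pi> j = i")
    case True
    have "C \<subseteq> {i, m, j}"
    proof
      fix y assume "y \<in> C" then show "y \<in> {i, m, j}"
        by induction (use True \<pi>_i \<pi>_m in auto)
    qed
    then have C': "C - {i, m} = {j}" using j_in_contracted by auto
    have "\<rho> j = j" using True i_ne_j j_less by (simp add: contract_apply)
    then have "cdes \<rho> (C - {i, m}) = 0" "casc \<rho> (C - {i, m}) = 0"
      unfolding C' by (simp_all add: cdes_def casc_def)
    moreover have "{y \<in> C - {i, m}. \<pi> y < y} = (if i < j then {j} else {})"
      and "{y \<in> C - {i, m}. y < \<pi> y} = (if j < i then {j} else {})"
      using C' True by auto
    ultimately show ?thesis using des asc i_ne_j by simp
  next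
    case False
    \<comment> \<open>The only changed step k -> i becomes k -> j, where k \<noteq> j compares alike
      with i and j.\<close>
    have "(\<pi> y < y \<longleftrightarrow> \<rho> y < y) \<and> (y < \<pi> y \<longleftrightarrow> y < \<rho> y)" if "y \<in> C - {i, m}" for y
    proof (cases "\<pi> y = i")
      case True
      then have "y \<noteq> i" "y \<noteq> j" using that False by auto
      then show ?thesis
        using True that adjacent_less_iff[OF adjacent] by (auto simp: contract_apply)
    qed (use that in \<open>simp add: contract_apply\<close>)
    then have "{y \<in> C - {i, m}. \<pi> y < y} = {y \<in> C - {i, m}. \<rho> y < y}"
      and "{y \<in> C - {i, m}. y < \<pi> y} = {y \<in> C - {i, m}. y < \<rho> y}"
      by blast+
    then show ?thesis using des asc by (simp add: cdes_def casc_def)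
  qed
qed

lemma cweight_on_contract: "cweight_on U \<pi> = cweight_on (U - {i, m}) \<rho> + 1"
proof -
  define R where "R = orbit \<pi> ` U - {C}"
  have "orbit \<pi> ` U = insert C R" using i_in_U by (auto simp: R_def)
  moreover have "orbit \<rho> ` (U - {i, m}) = insert (C - {i, m}) R"
    using cycles_contract by (simp add: R_def)
  moreover have "cdes \<rho> D = cdes \<pi> D \<and> casc \<rho> D = casc \<pi> D" if "D \<in> R" for D
  proof -
    obtain x where "D = orbit \<pi> x" "x \<notin> C"
      using \<open>D \<in> R\<close> orbit_eq_if_mem[OF permutation_\<pi>] by (auto simp: R_def)
    then show ?thesis using contract_eq_off_C by (simp add: cdes_def casc_def cong: conj_cong)
  qed
  moreover have "finite R" "C \<notin> R" "C - {i, m} \<notin> R"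
    using finite_U contracted_notin_cycles by (simp_all add: R_def)
  ultimately show ?thesis
    unfolding cweight_on_def cyc_eq_orbit[OF permutation_\<pi>] cyc_eq_orbit[OF permutation_\<rho>]
    using cdes_casc_contract_cycle by simp
qed

lemma odd_order_on_contract: "odd_order_on U \<pi> \<longleftrightarrow> odd_order_on (U - {i, m}) \<rho>"
proof -
  define R where "R = orbit \<pi> ` U - {C}"
  have "orbit \<pi> ` U = insert C R" using i_in_U by (auto simp: R_def)
  moreover have "orbit \<rho> ` (U - {i, m}) = insert (C - {i, m}) R"
    using cycles_contract by (simp add: R_def)
  ultimately show ?thesis
    unfolding odd_order_on_def cyc_eq_orbit[OF permutation_\<pi>] cyc_eq_orbit[OF permutation_\<rho>]
    using card_C by simp
qed

end

lemma bij_betw_contract_cycle: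
  assumes "finite U" "i < m" "j < m" "\<bar>int i - int j\<bar> = 1" "i \<in> U" "m \<in> U" "j \<in> U"
  shows "bij_betw (contract_cycle i m j) {\<pi> \<in> odd_perms_on U d. \<pi> i = m \<and> \<pi> m = j}
           (odd_perms_on (U - {i, m}) (d - 1))"
proof (rule bij_betw_byWitness[where f' = "expand_cycle i m j"])
  show "\<forall>\<pi> \<in> {\<pi> \<in> odd_perms_on U d. \<pi> i = m \<and> \<pi> m = j}.
      expand_cycle i m j (contract_cycle i m j \<pi>) = \<pi>"
    by (simp add: fun_eq_iff contract_cycle_def expand_cycle_def)
  show "\<forall>\<rho> \<in> odd_perms_on (U - {i, m}) (d - 1). contract_cycle i m j (expand_cycle i m j \<rho>) = \<rho>"
    by (simp add: fun_eq_iff contract_cycle_def expand_cycle_def)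
  show "contract_cycle i m j ` {\<pi> \<in> odd_perms_on U d. \<pi> i = m \<and> \<pi> m = j}
      \<subseteq> odd_perms_on (U - {i, m}) (d - 1)"
  proof (rule image_subsetI)
    fix \<pi> assume \<pi>: "\<pi> \<in> {\<pi> \<in> odd_perms_on U d. \<pi> i = m \<and> \<pi> m = j}"
    then interpret cycle_contraction U \<pi> i m j
      using assms by unfold_locales (simp_all add: odd_perms_on_def)
    show "contract_cycle i m j \<pi> \<in> odd_perms_on (U - {i, m}) (d - 1)"
      using \<pi> contract_permutes cweight_on_contract odd_order_on_contract
      by (simp add: odd_perms_on_def)
  qed
  show "expand_cycle i m j ` odd_perms_on (U - {i, m}) (d - 1)
      \<subseteq> {\<pi> \<in> odd_perms_on U d. \<pi> i = m \<and> \<pi> m = j}"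
  proof (rule image_subsetI)
    fix \<rho> assume \<rho>: "\<rho> \<in> odd_perms_on (U - {i, m}) (d - 1)"
    then have "\<rho> permutes U - {i, m}" by (simp add: odd_perms_on_def)
    then have "\<rho> i = i" "\<rho> m = m" "\<rho> permutes U"
      by (auto intro: permutes_not_in permutes_subset)
    then have "expand_cycle i m j \<rho> permutes U" "expand_cycle i m j \<rho> i = m"
      "expand_cycle i m j \<rho> m = j"
      using assms unfolding expand_cycle_def comp_assoc
      by (auto intro!: permutes_compose permutes_swap_id)
    then interpret cycle_contraction U "expand_cycle i m j \<rho>" i m j
      using assms by unfold_locales
    have "contract_cycle i m j (expand_cycle i m j \<rho>) = \<rho>"
      by (simp add: fun_eq_iff contract_cycle_def expand_cycle_def)
    then show "expand_cycle i m j \<rho> \<in> {\<pi> \<in> odd_perms_on U d. \<pi> i = m \<and> \<pi> m = j}"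
      using \<rho> permutes_U \<pi>_i \<pi>_m cweight_on_contract odd_order_on_contract
      by (simp add: odd_perms_on_def)
  qed
qed

definition relabel_perm :: "'a set \<Rightarrow> ('a \<Rightarrow> 'b) \<Rightarrow> ('a \<Rightarrow> 'a) \<Rightarrow> 'b \<Rightarrow> 'b" where
  "relabel_perm X h \<sigma> y = (if y \<in> h ` X then h (\<sigma> (inv_into X h y)) else y)"

lemma relabel_perm_apply: "inj_on h X \<Longrightarrow> x \<in> X \<Longrightarrow> relabel_perm X h \<sigma> (h x) = h (\<sigma> x)"
  by (simp add: relabel_perm_def)

lemma relabel_perm_permutes:
  assumes "\<sigma> permutes X" "inj_on h X"
  shows "relabel_perm X h \<sigma> permutes h ` X"
proof (rule bij_imp_permutes)
  have "bij_betw h X (h ` X)" using assms(2) by (rule inj_on_imp_bij_betw)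
  then have "bij_betw (h \<circ> (\<sigma> \<circ> inv_into X h)) (h ` X) (h ` X)"
    using bij_betw_trans[OF bij_betw_inv_into permutes_imp_bij[OF assms(1)]] bij_betw_trans
    by blast
  then show "bij_betw (relabel_perm X h \<sigma>) (h ` X) (h ` X)"
    by (rule bij_betw_cong[THEN iffD1, rotated]) (simp add: relabel_perm_def)
qed (simp add: relabel_perm_def)

lemma inj_on_relabel_perm:
  assumes "inj_on h X" shows "inj_on (relabel_perm X h) {\<sigma>. \<sigma> permutes X}"
proof (rule inj_onI, rule ext)
  fix \<sigma> \<sigma>' x
  assume \<sigma>: "\<sigma> \<in> {\<sigma>. \<sigma> permutes X}" "\<sigma>' \<in> {\<sigma>. \<sigma> permutes X}"
    and eq: "relabel_perm X h \<sigma> = relabel_perm X h \<sigma>'"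
  show "\<sigma> x = \<sigma>' x"
  proof (cases "x \<in> X")
    case True
    then have "h (\<sigma> x) = h (\<sigma>' x)"
      using eq relabel_perm_apply[OF assms] by metis
    then show ?thesis
      using True \<sigma> assms by (auto simp: permutes_in_image dest: inj_onD)
  qed (use \<sigma> in \<open>simp add: permutes_not_in\<close>)
qed

lemma cyc_conjugate:
  assumes "\<sigma> permutes X" "\<And>x. x \<in> X \<Longrightarrow> \<tau> (h x) = h (\<sigma> x)" "x \<in> X"
  shows "cyc \<tau> (h x) = h ` cyc \<sigma> x"
proof -
  have "(\<tau> ^^ k) (h x) = h ((\<sigma> ^^ k) x)" for k
    by (induction k) (simp_all add: assms permutes_in_funpow_image)
  then show ?thesis by (auto simp: cyc_def)
qed

lemma cdes_casc_conjugate: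
  assumes "\<sigma> permutes X" "strict_mono_on X h" "\<And>x. x \<in> X \<Longrightarrow> \<tau> (h x) = h (\<sigma> x)" "C \<subseteq> X"
  shows "cdes \<tau> (h ` C) = cdes \<sigma> C" "casc \<tau> (h ` C) = casc \<sigma> C"
proof -
  have "\<tau> (h c) < h c \<longleftrightarrow> \<sigma> c < c" "h c < \<tau> (h c) \<longleftrightarrow> c < \<sigma> c" if "c \<in> C" for c
    using that assms(3,4) strict_mono_on_less[OF assms(2)] permutes_in_image[OF assms(1)] by auto
  then have "{y \<in> h ` C. \<tau> y < y} = h ` {y \<in> C. \<sigma> y < y}"
    "{y \<in> h ` C. y < \<tau> y} = h ` {y \<in> C. y < \<sigma> y}" by auto
  moreover have "inj_on h C"
    using strict_mono_on_imp_inj_on[OF assms(2)] assms(4) by (rule inj_on_subset)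
  ultimately show "cdes \<tau> (h ` C) = cdes \<sigma> C" "casc \<tau> (h ` C) = casc \<sigma> C"
    by (simp_all add: cdes_def casc_def card_image inj_on_subset[of h C])
qed

lemma cweight_odd_order_conjugate:
  assumes \<sigma>: "\<sigma> permutes X" and mono: "strict_mono_on X h"
    and \<tau>: "\<And>x. x \<in> X \<Longrightarrow> \<tau> (h x) = h (\<sigma> x)"
  shows "cweight_on (h ` X) \<tau> = cweight_on X \<sigma>" "odd_order_on (h ` X) \<tau> \<longleftrightarrow> odd_order_on X \<sigma>"
proof -
  have inj: "inj_on h X" using mono by (rule strict_mono_on_imp_inj_on)
  have cyc_X: "cyc \<sigma> x \<subseteq> X" if "x \<in> X" for x
    using that \<sigma> by (auto simp: cyc_def permutes_in_funpow_image)
  have cycles: "cyc \<tau> ` h ` X = image h ` cyc \<sigma> ` X"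
    using cyc_conjugate[of \<sigma> X \<tau> h, OF \<sigma> \<tau>] by (simp add: image_image)
  have inj_cycles: "inj_on (image h) (cyc \<sigma> ` X)"
    using inj cyc_X by (auto intro!: inj_onI simp: inj_on_image_eq_iff)
  have card: "card (h ` C) = card C" if "C \<in> cyc \<sigma> ` X" for C
    using that cyc_X inj_on_subset[OF inj] by (auto intro: card_image)
  show "cweight_on (h ` X) \<tau> = cweight_on X \<sigma>"
    unfolding cweight_on_def cycles sum.reindex[OF inj_cycles]
    using cdes_casc_conjugate[of \<sigma> X h \<tau>, OF \<sigma> mono \<tau>] cyc_X by (auto intro!: sum.cong)
  show "odd_order_on (h ` X) \<tau> \<longleftrightarrow> odd_order_on X \<sigma>"
    unfolding odd_order_on_def cycles using card by auto
qed

lemma card_odd_perms_on_le: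
  assumes "bij_betw h X Y" "strict_mono_on X h" "finite Y"
  shows "card (odd_perms_on X d) \<le> card (odd_perms_on Y d)"
proof (rule card_inj_on_le)
  have inj: "inj_on h X" and Y: "Y = h ` X" using assms(1) by (auto simp: bij_betw_def)
  show "inj_on (relabel_perm X h) (odd_perms_on X d)"
    using inj_on_relabel_perm[OF inj] by (rule inj_on_subset) (auto simp: odd_perms_on_def)
  show "relabel_perm X h ` odd_perms_on X d \<subseteq> odd_perms_on Y d"
  proof (rule image_subsetI)
    fix \<sigma> assume "\<sigma> \<in> odd_perms_on X d"
    then have \<sigma>: "\<sigma> permutes X" "odd_order_on X \<sigma>" "int (cweight_on X \<sigma>) = d"
      by (simp_all add: odd_perms_on_def)
    note stats = cweight_odd_order_conjugate[OF \<sigma>(1) assms(2) relabel_perm_apply[OF inj]]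
    show "relabel_perm X h \<sigma> \<in> odd_perms_on Y d"
      using relabel_perm_permutes[OF \<sigma>(1) inj] stats \<sigma> by (simp add: odd_perms_on_def Y)
  qed
  show "finite (odd_perms_on Y d)"
    using finite_permutations[OF assms(3)] by (rule finite_subset[rotated]) (auto simp: odd_perms_on_def)
qed

lemma card_odd_perms_on_eq:
  assumes "finite X" "finite Y" "card X = card Y"
  shows "card (odd_perms_on X d) = card (odd_perms_on Y d)"
proof -
  obtain h where h: "bij_betw h X Y" "strict_mono_on X h"
    using obtain_order_iso[OF assms] .
  show ?thesis
    using card_odd_perms_on_le[OF h assms(2)]
      card_odd_perms_on_le[OF bij_betw_inv_into[OF h(1)] strict_mono_on_inv_into[OF h] assms(1)]
    by (rule antisym)
qed

theorem lemma2p1: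
  fixes n i j :: nat and d :: int
  assumes "n \<ge> 3" and "i \<in> {1..n-1}" and "j \<in> {1..n-1}"
    and "\<bar>int i - int j\<bar> = 1"
  shows "b_factor n d i j = b (n - 2) (d - 1) \<and> p_factor n d i j = p (n - 2) (d - 1)"
proof -
  have less: "i < n" "j < n" and letters: "i \<in> {1..n}" "n \<in> {1..n}" "j \<in> {1..n}"
    using assms(1-3) by auto
  then have size: "card ({1..n} - {i, n}) = card {1..n - 2}"
    by (simp add: card_Diff_subset)
  have "b_factor n d i j = card (ballot_words ({1..n} - {i, n}) (d - 1))"
    unfolding b_factor_def ballot_perms_eq_ballot_words factor_at_iff_append
    by (rule bij_betw_same_card[OF bij_betw_contract_factor[OF less assms(4) letters]])
  moreover have "p_factor n d i j = card (odd_perms_on ({1..n} - {i, n}) (d - 1))"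
    unfolding p_factor_def odd_perms_eq_odd_perms_on
    by (rule bij_betw_same_card[OF bij_betw_contract_cycle[OF _ less assms(4) letters]]) simp
  ultimately show ?thesis
    unfolding b_def p_def ballot_perms_eq_ballot_words odd_perms_eq_odd_perms_on
    using card_ballot_words_eq[OF _ _ size] card_odd_perms_on_eq[OF _ _ size] by simp
qed

end
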